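(* Let $u\geq 1$, $a=(-u,-1)$, $b=(u,1)$. Consider the following eight open rectangles ("grey cells"): $H_1=(-\infty,-u)\times(0,1)$, $H_2=(-u,0)\times(1,\infty)$, $H_3=(0,u)\times(-\infty,-1)$, $H_4=(u,\infty)\times(-1,0)$, $S_1=(-\infty,-u)\times(1,\infty)$, $S_2=(-u,0)\times(0,1)$, $S_3=(0,u)\times(-1,0)$, $S_4=(u,\infty)\times(-\infty,-1)$. If $C=I\times J$ is one of these cells and $x\in I$, then for each $p\neq 0$ close enough to zero there exists $y_p\in J$ such that $(x,y_p)\in B_p(a,b)$. Moreover, the remaining eight open rectangles of the form $I\times J$ with $I\in\{(-\infty,-u),(-u,0),(0,u),(u,\infty)\}$ and $J\in\{(-\infty,-1),(-1,0),(0,1),(1,\infty)\}$ ("white cells") contain no point of $B_p(a,b)$ for any $p\neq 0$.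
   Context: For $p\neq 0$ and $(x,y)\in\mathbb{R}^2$ let $L_p((x,y))=(|x|^p+|y|^p)^{1/p}$; for $p<0$ this is extended by setting $L_p((x,y))=0$ whenever $x=0$ or $y=0$. The bisector is $B_p(a,b)=\{q\in\mathbb{R}^2: L_p(a-q)=L_p(b-q)\}$. *)

theory Defs
  imports Complex_Main
begin

text \<open>The L_p "norm" on R^2; for p < 0 it is set to 0 when a coordinate vanishes.\<close>
definition Lp :: "real \<Rightarrow> real \<times> real \<Rightarrow> real" where
  "Lp p v = (if p < 0 \<and> (fst v = 0 \<or> snd v = 0) then 0
             else (\<bar>fst v\<bar> powr p + \<bar>snd v\<bar> powr p) powr (1 / p))"

definition bisector :: "real \<Rightarrow> real \<times> real \<Rightarrow> real \<times> real \<Rightarrow> (real \<times> real) set" where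
  "bisector p a b = {q. Lp p (fst a - fst q, snd a - snd q) = Lp p (fst b - fst q, snd b - snd q)}"

definition xints :: "real \<Rightarrow> real set set" where
  "xints u = {{..< -u}, {-u <..< 0}, {0 <..< u}, {u <..}}"

definition yints :: "real set set" where
  "yints = {{..< -1}, {-1 <..< 0}, {0 <..< 1}, {1 <..}}"

definition cells :: "real \<Rightarrow> (real set \<times> real set) set" where
  "cells u = xints u \<times> yints"

definition grey :: "real \<Rightarrow> (real set \<times> real set) set" where
  "grey u = {({..< -u}, {0 <..< 1}), ({-u <..< 0}, {1 <..}),
             ({0 <..< u}, {..< -1}), ({u <..}, {-1 <..< 0}),
             ({..< -u}, {1 <..}), ({-u <..< 0}, {0 <..< 1}),
             ({0 <..< u}, {-1 <..< 0}), ({u <..}, {..< -1})}"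

definition white :: "real \<Rightarrow> (real set \<times> real set) set" where
  "white u = cells u - grey u"

end

theory Submission
  imports Defs
begin

(* For p \<noteq> 0 and q = (x, y) off the lines x = \<plusminus>u and y = \<plusminus>1, q lies on B_p(a, b) iff
   |x + u|^p + |y + 1|^p = |x - u|^p + |y - 1|^p.
   In the quadrants x y > 0, which contain the white cells, q is strictly closer to one of a, b
   in both coordinates, so strict monotonicity of L_p keeps it off the bisector.
   Dividing the difference of the two sums by p and letting p \<rightarrow> 0 gives
   ln (|x + u| |y + 1|) - ln (|x - u| |y - 1|): the bisectors tend to the curve
   |x + u| |y + 1| = |x - u| |y - 1|, which crosses every vertical line of a grey cell inside
   the cell. A sign change of the limit along a vertical segment persists for all small p,
   and the intermediate value theorem yields y_p. *)

lemma tendsto_powr_minus_one_div_ln: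
  fixes t :: real
  assumes "t > 0"
  shows "((\<lambda>p. (t powr p - 1) / p) \<longlongrightarrow> ln t) (at 0)"
proof -
  have "((\<lambda>p. exp (p * ln t)) has_real_derivative ln t) (at 0)"
    by (auto intro!: derivative_eq_intros)
  then have "((\<lambda>p. (exp ((0 + p) * ln t) - exp (0 * ln t)) / p) \<longlongrightarrow> ln t) (at 0)"
    unfolding DERIV_def .
  then show ?thesis
    using assms by (simp add: powr_def mult.commute)
qed

lemma tendsto_powr_sum_diff_div:
  fixes A B C D :: real
  assumes "A > 0" "B > 0" "C > 0" "D > 0"
  shows "((\<lambda>p. (A powr p + B powr p - (C powr p + D powr p)) / p)
           \<longlongrightarrow> ln (A * B) - ln (C * D)) (at 0)"
proof -
  have "((\<lambda>p. (A powr p - 1) / p + (B powr p - 1) / p - ((C powr p - 1) / p + (D powr p - 1) / p))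
           \<longlongrightarrow> ln A + ln B - (ln C + ln D)) (at 0)"
    using assms by (intro tendsto_intros tendsto_powr_minus_one_div_ln)
  then show ?thesis
    using assms by (simp add: ln_mult diff_divide_distrib add_divide_distrib algebra_simps)
qed

lemma IVT_opposite_signs:
  fixes f :: "real \<Rightarrow> real"
  assumes "continuous_on {min a b..max a b} f" "f a * f b < 0"
  shows "\<exists>y\<in>{min a b..max a b}. f y = 0"
  using assms IVT'[of f a 0 b] IVT2'[of f a 0 b] IVT'[of f b 0 a] IVT2'[of f b 0 a]
  by (cases "a \<le> b") (force simp: mult_less_0_iff min_def max_def)+

lemma Lp_eq_iff_powr_sum:
  fixes p v1 v2 w1 w2 :: real
  assumes "p \<noteq> 0" "v1 \<noteq> 0" "v2 \<noteq> 0" "w1 \<noteq> 0" "w2 \<noteq> 0"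
  shows "Lp p (v1, v2) = Lp p (w1, w2) \<longleftrightarrow>
           \<bar>v1\<bar> powr p + \<bar>v2\<bar> powr p = \<bar>w1\<bar> powr p + \<bar>w2\<bar> powr p"
proof -
  define S T where "S = \<bar>v1\<bar> powr p + \<bar>v2\<bar> powr p" and "T = \<bar>w1\<bar> powr p + \<bar>w2\<bar> powr p"
  have "S > 0" "T > 0"
    using assms by (simp_all add: S_def T_def add_pos_pos)
  have "(S powr (1 / p)) powr p = S" "(T powr (1 / p)) powr p = T"
    using \<open>S > 0\<close> \<open>T > 0\<close> assms(1) by (simp_all add: powr_powr)
  then have "S powr (1 / p) = T powr (1 / p) \<longleftrightarrow> S = T"
    by metis
  then show ?thesis
    using assms by (simp add: Lp_def S_def T_def)
qed

lemma Lp_strict_mono: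
  fixes p v1 v2 w1 w2 :: real
  assumes "p \<noteq> 0" "0 < \<bar>v1\<bar>" "\<bar>v1\<bar> < \<bar>w1\<bar>" "0 < \<bar>v2\<bar>" "\<bar>v2\<bar> < \<bar>w2\<bar>"
  shows "Lp p (v1, v2) < Lp p (w1, w2)"
proof (cases "p > 0")
  case True
  then have "\<bar>v1\<bar> powr p + \<bar>v2\<bar> powr p < \<bar>w1\<bar> powr p + \<bar>w2\<bar> powr p"
    using assms by (intro add_strict_mono powr_less_mono2) auto
  then show ?thesis
    using True assms by (simp add: Lp_def powr_less_mono2 add_pos_pos)
next
  case False
  then have "p < 0" "w1 \<noteq> 0" "w2 \<noteq> 0"
    using assms by auto
  moreover have "\<bar>w1\<bar> powr p + \<bar>w2\<bar> powr p < \<bar>v1\<bar> powr p + \<bar>v2\<bar> powr p"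
    using assms \<open>p < 0\<close> by (intro add_strict_mono powr_less_mono2_neg) auto
  ultimately show ?thesis
    using assms by (simp add: Lp_def powr_less_mono2_neg add_pos_pos)
qed

lemma mem_bisector_iff_powr_sum:
  fixes p x y :: real and a b :: "real \<times> real"
  assumes "p \<noteq> 0" "x \<noteq> fst a" "x \<noteq> fst b" "y \<noteq> snd a" "y \<noteq> snd b"
  shows "(x, y) \<in> bisector p a b \<longleftrightarrow>
           \<bar>fst a - x\<bar> powr p + \<bar>snd a - y\<bar> powr p = \<bar>fst b - x\<bar> powr p + \<bar>snd b - y\<bar> powr p"
  using assms by (simp add: bisector_def Lp_eq_iff_powr_sum)

lemma eventually_bisector_crosses_segment:
  fixes x y0 y1 :: real and a b :: "real \<times> real"
  assumes "x \<noteq> fst a" "x \<noteq> fst b"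
    and "snd a \<notin> {min y0 y1..max y0 y1}" "snd b \<notin> {min y0 y1..max y0 y1}"
    and "\<bar>fst a - x\<bar> * \<bar>snd a - y0\<bar> < \<bar>fst b - x\<bar> * \<bar>snd b - y0\<bar>"
    and "\<bar>fst a - x\<bar> * \<bar>snd a - y1\<bar> > \<bar>fst b - x\<bar> * \<bar>snd b - y1\<bar>"
  shows "\<forall>\<^sub>F p in at 0. \<exists>y\<in>{min y0 y1..max y0 y1}. (x, y) \<in> bisector p a b"
proof -
  define Y where "Y = {min y0 y1..max y0 y1}"
  define F where "F p y = \<bar>fst a - x\<bar> powr p + \<bar>snd a - y\<bar> powr p
                          - (\<bar>fst b - x\<bar> powr p + \<bar>snd b - y\<bar> powr p)" for p y :: real
  define G where "G y = ln (\<bar>fst a - x\<bar> * \<bar>snd a - y\<bar>) - ln (\<bar>fst b - x\<bar> * \<bar>snd b - y\<bar>)" for y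
  have Y: "y0 \<in> Y" "y1 \<in> Y" "snd a \<notin> Y" "snd b \<notin> Y"
    using assms(3,4) by (auto simp: Y_def)
  have lim: "((\<lambda>p. F p y / p) \<longlongrightarrow> G y) (at 0)" if "y \<in> Y" for y
    unfolding F_def G_def using assms(1,2) Y that
    by (intro tendsto_powr_sum_diff_div) auto
  have pos: "0 < \<bar>fst a - x\<bar> * \<bar>snd a - y\<bar>" "0 < \<bar>fst b - x\<bar> * \<bar>snd b - y\<bar>"
    if "y \<in> Y" for y
    using assms(1,2) Y that by (metis zero_less_abs_iff mult_pos_pos right_minus_eq)+
  have G: "G y0 < 0" "G y1 > 0"
    using assms(5,6) pos Y by (simp_all add: G_def)
  have "\<forall>\<^sub>F p in at 0. F p y0 / p < 0 \<and> F p y1 / p > 0"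
    using order_tendstoD(2)[OF lim[OF Y(1)] G(1)] order_tendstoD(1)[OF lim[OF Y(2)] G(2)]
    by (rule eventually_conj)
  then show ?thesis
    unfolding Y_def[symmetric]
  proof (rule eventually_mono)
    fix p assume p: "F p y0 / p < 0 \<and> F p y1 / p > 0"
    then have "p \<noteq> 0"
      by auto
    have "F p y0 * F p y1 = (F p y0 / p) * (F p y1 / p) * p\<^sup>2"
      using \<open>p \<noteq> 0\<close> by (simp add: power2_eq_square)
    also have "\<dots> < 0"
      using p \<open>p \<noteq> 0\<close> by (intro mult_neg_pos) (auto simp: mult_neg_pos)
    finally have "F p y0 * F p y1 < 0" .
    moreover have "continuous_on Y (F p)"
      unfolding F_def using Y by (intro continuous_intros) auto
    ultimately obtain y where "y \<in> Y" "F p y = 0"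
      using IVT_opposite_signs[of y0 y1 "F p"] by (auto simp: Y_def)
    have "y \<noteq> snd a" "y \<noteq> snd b"
      using \<open>y \<in> Y\<close> Y(3,4) by auto
    then have "(x, y) \<in> bisector p a b"
      using mem_bisector_iff_powr_sum[OF \<open>p \<noteq> 0\<close> assms(1,2)] \<open>F p y = 0\<close> by (simp add: F_def)
    with \<open>y \<in> Y\<close> show "\<exists>y\<in>Y. (x, y) \<in> bisector p a b" ..
  qed
qed

text \<open>The witnesses lie on either side of the root \<open>(C - A) / (C + A)\<close>, resp.
  \<open>(C + A) / (C - A)\<close>, of \<open>A (y + 1) = C \<bar>y - 1\<bar>\<close>.\<close>
lemma product_sign_change_upper:
  fixes A C :: real and J :: "real set"
  assumes "0 < A" "A < C" "J = {0<..<1} \<or> J = {1<..}"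
  shows "\<exists>y0\<in>J. \<exists>y1\<in>J. A * \<bar>y0 + 1\<bar> < C * \<bar>y0 - 1\<bar> \<and> C * \<bar>y1 - 1\<bar> < A * \<bar>y1 + 1\<bar>"
  using assms(3)
proof
  assume J: "J = {0<..<1}"
  define y0 y1 where "y0 = (C - A) / (2 * (C + A))" and "y1 = C / (C + A)"
  have y0: "(C + A) * y0 = (C - A) / 2" and y1: "(C + A) * y1 = C"
    using assms(1,2) by (simp_all add: y0_def y1_def field_simps)
  have "0 < y0" "y0 < 1" "0 < y1" "y1 < 1"
    using assms(1,2) by (simp_all add: y0_def y1_def)
  moreover have "A * (y0 + 1) < C * (1 - y0)"
    using y0 assms(2) by (simp add: algebra_simps)
  moreover have "C * (1 - y1) < A * (y1 + 1)"
    using y1 assms(1) by (simp add: algebra_simps)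
  ultimately show ?thesis
    unfolding J by (intro bexI[of _ y0] bexI[of _ y1] conjI) simp_all
next
  assume J: "J = {1<..}"
  define y0 y1 where "y0 = 2 * (C + A) / (C - A)" and "y1 = C / (C - A)"
  have y0: "(C - A) * y0 = 2 * (C + A)" and y1: "(C - A) * y1 = C"
    using assms(1,2) by (simp_all add: y0_def y1_def)
  have "1 < y0" "1 < y1"
    using assms(1,2) by (simp_all add: y0_def y1_def)
  moreover have "A * (y0 + 1) < C * (y0 - 1)"
    using y0 assms(1,2) by (simp add: algebra_simps)
  moreover have "C * (y1 - 1) < A * (y1 + 1)"
    using y1 assms(1) by (simp add: algebra_simps)
  ultimately show ?thesis
    unfolding J by (intro bexI[of _ y0] bexI[of _ y1] conjI) simp_all
qed

lemma product_sign_change_lower: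
  fixes A C :: real and J :: "real set"
  assumes "0 < C" "C < A" "J = {-1<..<0} \<or> J = {..<-1}"
  shows "\<exists>y0\<in>J. \<exists>y1\<in>J. A * \<bar>y0 + 1\<bar> < C * \<bar>y0 - 1\<bar> \<and> C * \<bar>y1 - 1\<bar> < A * \<bar>y1 + 1\<bar>"
proof -
  define J' where "J' = uminus ` J"
  have "J' = {0<..<1} \<or> J' = {1<..}"
    using assms(3) by (auto simp: J'_def)
  then have "\<exists>y0\<in>J'. \<exists>y1\<in>J'. C * \<bar>y0 + 1\<bar> < A * \<bar>y0 - 1\<bar> \<and> A * \<bar>y1 - 1\<bar> < C * \<bar>y1 + 1\<bar>"
    by (rule product_sign_change_upper[OF assms(1,2)])
  then obtain y0 y1 where y: "y0 \<in> J'" "y1 \<in> J'"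
    "C * \<bar>y0 + 1\<bar> < A * \<bar>y0 - 1\<bar>" "A * \<bar>y1 - 1\<bar> < C * \<bar>y1 + 1\<bar>"
    by blast
  have "-y1 \<in> J" "-y0 \<in> J"
    using y(1,2) by (auto simp: J'_def)
  moreover have "A * \<bar>-y1 + 1\<bar> < C * \<bar>-y1 - 1\<bar>" "C * \<bar>-y0 - 1\<bar> < A * \<bar>-y0 + 1\<bar>"
    using y(3,4) by (simp_all add: abs_minus_commute add.commute)
  ultimately show ?thesis
    by blast
qed

lemma grey_cell_meets_bisector:
  fixes u x :: real
  assumes "u > 0" "(I, J) \<in> grey u" "x \<in> I"
  shows "\<forall>\<^sub>F p in at 0. \<exists>y\<in>J. (x, y) \<in> bisector p (-u, -1) (u, 1)"
proof -
  have "x \<noteq> 0" "x \<noteq> u" "x \<noteq> -u" "J \<in> yints"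
    using assms unfolding grey_def yints_def by auto
  have "\<exists>y0\<in>J. \<exists>y1\<in>J. \<bar>x + u\<bar> * \<bar>y0 + 1\<bar> < \<bar>x - u\<bar> * \<bar>y0 - 1\<bar> \<and>
                      \<bar>x - u\<bar> * \<bar>y1 - 1\<bar> < \<bar>x + u\<bar> * \<bar>y1 + 1\<bar>"
  proof (cases "x < 0")
    case True
    then have "J = {0<..<1} \<or> J = {1<..}"
      using assms unfolding grey_def by auto
    then show ?thesis
      using True assms(1) \<open>x \<noteq> -u\<close> by (intro product_sign_change_upper) auto
  next
    case False
    then have "J = {-1<..<0} \<or> J = {..<-1}"
      using assms unfolding grey_def by auto
    then show ?thesis
      using False assms(1) \<open>x \<noteq> 0\<close> \<open>x \<noteq> u\<close> by (intro product_sign_change_lower) (auto simp: abs_if)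
  qed
  then obtain y0 y1 where y: "y0 \<in> J" "y1 \<in> J"
    "\<bar>-u - x\<bar> * \<bar>-1 - y0\<bar> < \<bar>u - x\<bar> * \<bar>1 - y0\<bar>"
    "\<bar>-u - x\<bar> * \<bar>-1 - y1\<bar> > \<bar>u - x\<bar> * \<bar>1 - y1\<bar>"
    by (auto simp: abs_minus_commute add.commute)
  have "{min y0 y1..max y0 y1} \<subseteq> J" "1 \<notin> J" "-1 \<notin> J"
    using \<open>J \<in> yints\<close> y(1,2) by (auto simp: yints_def)
  then have "\<forall>\<^sub>F p in at 0. \<exists>y\<in>{min y0 y1..max y0 y1}. (x, y) \<in> bisector p (-u, -1) (u, 1)"
    using \<open>x \<noteq> u\<close> \<open>x \<noteq> -u\<close> y(3,4) by (intro eventually_bisector_crosses_segment) auto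
  then show ?thesis
    by (rule eventually_mono) (use \<open>{min y0 y1..max y0 y1} \<subseteq> J\<close> in blast)
qed

lemma grey_if_opposite_signs:
  fixes u x y :: real
  assumes "u > 0" "(I, J) \<in> cells u" "x \<in> I" "y \<in> J" "x < 0 \<and> 0 < y \<or> 0 < x \<and> y < 0"
  shows "(I, J) \<in> grey u"
  using assms unfolding cells_def xints_def yints_def
  by (elim SigmaE2 insertE emptyE; hypsubst; simp add: grey_def)

lemma white_cellE:
  fixes u x y :: real
  assumes "u > 0" "(I, J) \<in> white u" "x \<in> I" "y \<in> J"
  obtains "0 < x" "x \<noteq> u" "0 < y" "y \<noteq> 1"
        | "x < 0" "x \<noteq> -u" "y < 0" "y \<noteq> -1"
proof -
  have cell: "(I, J) \<in> cells u" "(I, J) \<notin> grey u"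
    using assms(2) by (simp_all add: white_def)
  then have "x \<noteq> 0" "x \<noteq> u" "x \<noteq> -u" "y \<noteq> 0" "y \<noteq> 1" "y \<noteq> -1"
    using assms(1,3,4) by (auto simp: cells_def xints_def yints_def)
  moreover have "\<not> (x < 0 \<and> 0 < y \<or> 0 < x \<and> y < 0)"
    using grey_if_opposite_signs[OF assms(1) cell(1) assms(3,4)] cell(2) by blast
  ultimately show thesis
    using that by force
qed

lemma white_cell_disjoint_bisector:
  fixes u p :: real
  assumes "u > 0" "p \<noteq> 0" "(I, J) \<in> white u"
  shows "(I \<times> J) \<inter> bisector p (-u, -1) (u, 1) = {}"
proof (intro equals0I, clarify)
  fix x y assume "x \<in> I" "y \<in> J" and on_bisector: "(x, y) \<in> bisector p (-u, -1) (u, 1)"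
  from assms(1,3) \<open>x \<in> I\<close> \<open>y \<in> J\<close> show False
  proof (cases rule: white_cellE)
    case 1
    then have "Lp p (u - x, 1 - y) < Lp p (-u - x, -1 - y)"
      using assms by (intro Lp_strict_mono) auto
    then show False
      using on_bisector by (simp add: bisector_def)
  next
    case 2
    then have "Lp p (-u - x, -1 - y) < Lp p (u - x, 1 - y)"
      using assms by (intro Lp_strict_mono) auto
    then show False
      using on_bisector by (simp add: bisector_def)
  qed
qed

theorem lemma1:
  fixes u :: real
  assumes "u \<ge> 1"
  defines "a \<equiv> (-u, -1::real)" and "b \<equiv> (u, 1::real)"
  shows "(\<forall>(I, J) \<in> grey u. \<forall>x \<in> I. \<exists>\<delta>>0. \<forall>p. p \<noteq> 0 \<and> \<bar>p\<bar> < \<delta> \<longrightarrow>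
            (\<exists>y \<in> J. (x, y) \<in> bisector p a b))
       \<and> (\<forall>(I, J) \<in> white u. \<forall>p. p \<noteq> 0 \<longrightarrow> (I \<times> J) \<inter> bisector p a b = {})"
proof -
  have "u > 0"
    using assms(1) by simp
  show ?thesis
  proof (intro conjI; clarify)
    fix I J x assume "(I, J) \<in> grey u" "x \<in> I"
    with \<open>u > 0\<close> have "\<forall>\<^sub>F p in at 0. \<exists>y\<in>J. (x, y) \<in> bisector p a b"
      unfolding a_def b_def by (rule grey_cell_meets_bisector)
    then show "\<exists>\<delta>>0. \<forall>p. p \<noteq> 0 \<and> \<bar>p\<bar> < \<delta> \<longrightarrow> (\<exists>y\<in>J. (x, y) \<in> bisector p a b)"
      by (simp add: eventually_at dist_real_def)
  next
    fix I J p assume "(I, J) \<in> white u" "p \<noteq> (0::real)"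
    with \<open>u > 0\<close> show "(I \<times> J) \<inter> bisector p a b = {}"
      unfolding a_def b_def by (intro white_cell_disjoint_bisector)
  qed
qed

end
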